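(* Consider the nearest-neighbor graph $\mathcal{G}^\mu_{x(k)}$ for a positive integer $\mu$. The maximizing algorithm (in $\mathcal{A}_{\rm max}$) achieves global finite-time consensus within at most $\lceil n/\mu\rceil$ steps: for every initial time $k_0$ and initial value $x^0\in\mathbb{R}^n$, all $x_i(k_0+\lceil n/\mu\rceil)$ are equal.
   Context: Nodes $\mathcal{V}=\{1,\dots,n\}$, $n\ge3$, states $x_i(k)\in\mathbb{R}$, discrete time. The class $\mathcal{A}_{\rm max}$ is the update $x_i(k+1)=\max_{j\in\mathcal{N}_i(k)}x_j(k)$, where $\mathcal{N}_i(k)=\{i\}\cup\mathcal{N}_i^-(k)\cup\mathcal{N}_i^+(k)$. Nearest-neighbor graph $\mathcal{G}^\mu_{x(k)}$: $\mathcal{N}_i^-(k)$ is a set of $\min(\mu,|\{j:x_j(k)<x_i(k)\}|)$ nodes $j$ with $x_j(k)<x_i(k)$ whose values are closest to $x_i(k)$ among such nodes (ties broken arbitrarily), and $\mathcal{N}_i^+(k)$ is defined symmetrically from $\{j: x_j(k)>x_i(k)\}$. $\lceil z\rceil$ is the smallest integer not smaller than $z$. *)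

theory Defs
  imports Complex_Main
begin

text \<open>Nodes are 1..n; a state is a function nat => real (only values on 1..n matter).\<close>

definition below_set :: "nat \<Rightarrow> (nat \<Rightarrow> real) \<Rightarrow> nat \<Rightarrow> nat set" where
  "below_set n x i = {j \<in> {1..n}. x j < x i}"

definition above_set :: "nat \<Rightarrow> (nat \<Rightarrow> real) \<Rightarrow> nat \<Rightarrow> nat set" where
  "above_set n x i = {j \<in> {1..n}. x j > x i}"

text \<open>S is a valid choice of N_i^- : min(mu, |below|) nodes below x_i whose values are
  closest to x_i among such nodes (ties arbitrary).\<close>
definition valid_lower :: "nat \<Rightarrow> nat \<Rightarrow> (nat \<Rightarrow> real) \<Rightarrow> nat \<Rightarrow> nat set \<Rightarrow> bool" where
  "valid_lower n \<mu> x i S \<longleftrightarrow>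
     S \<subseteq> below_set n x i \<and> card S = min \<mu> (card (below_set n x i)) \<and>
     (\<forall>j\<in>S. \<forall>l\<in>below_set n x i - S. \<bar>x i - x j\<bar> \<le> \<bar>x i - x l\<bar>)"

definition valid_upper :: "nat \<Rightarrow> nat \<Rightarrow> (nat \<Rightarrow> real) \<Rightarrow> nat \<Rightarrow> nat set \<Rightarrow> bool" where
  "valid_upper n \<mu> x i S \<longleftrightarrow>
     S \<subseteq> above_set n x i \<and> card S = min \<mu> (card (above_set n x i)) \<and>
     (\<forall>j\<in>S. \<forall>l\<in>above_set n x i - S. \<bar>x j - x i\<bar> \<le> \<bar>x l - x i\<bar>)"

text \<open>N is a neighbor set of i in some realization of the nearest-neighbor graph G^mu_x.\<close>
definition nn_neighbors :: "nat \<Rightarrow> nat \<Rightarrow> (nat \<Rightarrow> real) \<Rightarrow> nat \<Rightarrow> nat set \<Rightarrow> bool" where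
  "nn_neighbors n \<mu> x i N \<longleftrightarrow>
     (\<exists>Sm Sp. valid_lower n \<mu> x i Sm \<and> valid_upper n \<mu> x i Sp \<and> N = {i} \<union> Sm \<union> Sp)"

end

theory Submission
  imports Defs
begin

(* Let M be the largest initial value and m a node attaining it.  Under the
   max-update every value is nondecreasing and never exceeds M, and m stays at M.  Call a
   node deficient if its value is below M.  If a deficient node i has fewer than mu
   deficient nodes strictly above it, then its upper neighbor set (the min(mu, .) closest
   nodes above i) cannot consist of deficient nodes only: either it has mu elements, or it
   contains every node above i, in particular m.  So i reaches M after one step.  Among any
   finite set, at least min(mu, card) elements have fewer than mu elements strictly above
   them; hence each step removes at least min(mu, d) of the d deficient nodes.  Since at most
   n - 1 nodes are deficient initially, none are left after ceil(n/mu) steps. *)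

lemma card_few_above:
  fixes f :: "'a \<Rightarrow> 'b::linorder"
  assumes "finite B"
  shows "min \<mu> (card B) \<le> card {i\<in>B. card {j\<in>B. f i < f j} < \<mu>}"
  using assms
proof (induction "card B" arbitrary: B rule: less_induct)
  case less
  let ?top = "\<lambda>B. {i\<in>B. card {j\<in>B. f i < f j} < \<mu>}"
  show ?case
  proof (cases "card B \<le> \<mu>")
    case True
    have "card {j\<in>B. f i < f j} < \<mu>" if "i \<in> B" for i
    proof -
      have "card {j\<in>B. f i < f j} \<le> card (B - {i})"
        using less.prems by (intro card_mono) auto
      also have "\<dots> < card B" using that less.prems by (rule card_Diff1_less[rotated])
      finally show ?thesis using True by simp
    qed
    then have "?top B = B" by auto
    then show ?thesis by simp
  next
    case False
    (* remove an element of minimal key: it lies below everything, so removing it does not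
       change the elements above any other node *)
    have "Min (f ` B) \<in> f ` B" using False less.prems by (intro Min_in) auto
    then obtain m where m: "m \<in> B" "f m = Min (f ` B)" by auto
    then have m_min: "\<forall>j\<in>B. f m \<le> f j" using less.prems by simp
    let ?B' = "B - {m}"
    have card_B': "card ?B' = card B - 1" using m less.prems by simp
    have "card ?B' < card B" using m less.prems by (intro card_Diff1_less)
    have IH: "min \<mu> (card ?B') \<le> card (?top ?B')"
      using less.hyps[OF \<open>card ?B' < card B\<close>] less.prems by simp
    have "{j\<in>B. f i < f j} = {j\<in>?B'. f i < f j}" if "i \<in> ?B'" for i
      using m m_min that by force
    then have "?top ?B' \<subseteq> ?top B" by auto
    then have "card (?top ?B') \<le> card (?top B)"
      using less.prems by (intro card_mono) auto
    then show ?thesis using IH card_B' False by simp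
  qed
qed

lemma nn_neighbors_props:
  assumes "nn_neighbors n \<mu> x i N" and "i \<in> {1..n}"
  shows "N \<subseteq> {1..n}" "i \<in> N" "\<exists>Sp. valid_upper n \<mu> x i Sp \<and> Sp \<subseteq> N"
  using assms
  unfolding nn_neighbors_def valid_lower_def valid_upper_def below_set_def above_set_def
  by blast+

lemma max_update_bounds:
  assumes nb: "nn_neighbors n \<mu> x i N" and i: "i \<in> {1..n}"
    and le: "\<forall>j\<in>{1..n}. x j \<le> M"
  shows "x i \<le> Max (x ` N)" "Max (x ` N) \<le> M"
proof -
  have N: "N \<subseteq> {1..n}" "i \<in> N" using nn_neighbors_props[OF nb i] by auto
  have "finite N" using N(1) by (rule finite_subset) simp
  show "x i \<le> Max (x ` N)" using \<open>finite N\<close> N by (intro Max_ge) auto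
  show "Max (x ` N) \<le> M" using \<open>finite N\<close> N le by (subst Max_le_iff) auto
qed

definition deficient :: "nat \<Rightarrow> real \<Rightarrow> (nat \<Rightarrow> real) \<Rightarrow> nat set" where
  "deficient n M x = {i\<in>{1..n}. x i < M}"

(* Either the upper neighbor set has
   mu elements, so not all of them are deficient, or it contains all nodes above i, among
   them m. *)
lemma upper_neighbor_attains_max:
  assumes Sp: "valid_upper n \<mu> x i Sp"
    and le: "\<forall>j\<in>{1..n}. x j \<le> M" and m: "m \<in> {1..n}" "x m = M" and xi: "x i < M"
    and few: "card {j\<in>deficient n M x. x i < x j} < \<mu>"
  shows "\<exists>j\<in>Sp. x j = M"
proof (rule ccontr)
  assume none: "\<not> (\<exists>j\<in>Sp. x j = M)"
  have Sp_above: "Sp \<subseteq> above_set n x i" using Sp unfolding valid_upper_def by auto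
  have "Sp \<subseteq> {j\<in>deficient n M x. x i < x j}"
  proof
    fix j assume j: "j \<in> Sp"
    then have j_node: "j \<in> {1..n}" and "x i < x j" using Sp_above by (auto simp: above_set_def)
    moreover have "x j < M" using le j_node j none by (metis order_le_neq_trans)
    ultimately show "j \<in> {j\<in>deficient n M x. x i < x j}" by (simp add: deficient_def)
  qed
  then have "card Sp \<le> card {j\<in>deficient n M x. x i < x j}"
    by (intro card_mono) (auto simp: deficient_def)
  then have "card Sp < \<mu>" using few by simp
  then have "card Sp = card (above_set n x i)" using Sp unfolding valid_upper_def by auto
  then have "Sp = above_set n x i"
    using Sp_above by (intro card_subset_eq) (auto simp: above_set_def)
  moreover have "m \<in> above_set n x i" using m xi by (simp add: above_set_def)
  ultimately show False using none m(2) by blast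
qed

lemma max_update_step:
  assumes le: "\<forall>i\<in>{1..n}. x i \<le> M" and m: "m \<in> {1..n}" "x m = M"
    and nb: "\<And>i. i \<in> {1..n} \<Longrightarrow> nn_neighbors n \<mu> x i (N i) \<and> x' i = Max (x ` N i)"
  shows "\<forall>i\<in>{1..n}. x' i \<le> M" "x' m = M"
    and "deficient n M x' \<subseteq>
      deficient n M x - {i\<in>deficient n M x. card {j\<in>deficient n M x. x i < x j} < \<mu>}"
proof -
  have bounds: "x i \<le> x' i" "x' i \<le> M" if "i \<in> {1..n}" for i
    using max_update_bounds[OF conjunct1[OF nb[OF that]] that le] nb[OF that] by auto
  show "\<forall>i\<in>{1..n}. x' i \<le> M" using bounds(2) by auto
  show "x' m = M" using bounds[OF m(1)] m(2) by simp
  show "deficient n M x' \<subseteq>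
      deficient n M x - {i\<in>deficient n M x. card {j\<in>deficient n M x. x i < x j} < \<mu>}"
  proof
    fix i assume "i \<in> deficient n M x'"
    then have i: "i \<in> {1..n}" "x' i < M" by (auto simp: deficient_def)
    have xi: "x i < M" using bounds(1)[OF i(1)] i(2) by simp
    have "\<not> card {j\<in>deficient n M x. x i < x j} < \<mu>"
    proof
      assume "card {j\<in>deficient n M x. x i < x j} < \<mu>"
      moreover obtain Sp where "valid_upper n \<mu> x i Sp" "Sp \<subseteq> N i"
        using nn_neighbors_props(3) nb[OF i(1)] i(1) by blast
      ultimately obtain j where j: "j \<in> N i" "x j = M"
        using upper_neighbor_attains_max le m xi by blast
      have "N i \<subseteq> {1..n}" using nn_neighbors_props(1) nb[OF i(1)] i(1) by blast
      then have "finite (N i)" by (rule finite_subset) simp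
      then have "M \<le> Max (x ` N i)" using j by (intro Max_ge) auto
      then have "M \<le> x' i" using nb[OF i(1)] by simp
      then show False using i(2) by simp
    qed
    then show "i \<in> deficient n M x -
        {i\<in>deficient n M x. card {j\<in>deficient n M x. x i < x j} < \<mu>}"
      using i(1) xi by (simp add: deficient_def)
  qed
qed

lemma card_deficient_step:
  assumes "deficient n M x' \<subseteq>
      deficient n M x - {i\<in>deficient n M x. card {j\<in>deficient n M x. x i < x j} < \<mu>}"
  shows "card (deficient n M x') \<le> card (deficient n M x) - min \<mu> (card (deficient n M x))"
proof -
  let ?D = "deficient n M x"
  let ?top = "{i\<in>?D. card {j\<in>?D. x i < x j} < \<mu>}"
  have fin: "finite ?D" by (simp add: deficient_def)
  have "card (deficient n M x') \<le> card (?D - ?top)"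
    using assms fin by (intro card_mono) auto
  also have "\<dots> = card ?D - card ?top" using fin by (intro card_Diff_subset) auto
  also have "\<dots> \<le> card ?D - min \<mu> (card ?D)"
    using card_few_above[OF fin, where f = x and \<mu> = \<mu>] by simp
  finally show ?thesis .
qed

lemma deficient_decay:
  assumes m: "m \<in> {1..n}" "x s m = M" and le: "\<forall>i\<in>{1..n}. x s i \<le> M"
    and upd: "\<And>k i. k \<ge> s \<Longrightarrow> i \<in> {1..n} \<Longrightarrow>
           nn_neighbors n \<mu> (x k) i (N k i) \<and> x (Suc k) i = Max (x k ` N k i)"
  shows "(\<forall>i\<in>{1..n}. x (s + t) i \<le> M) \<and> x (s + t) m = M \<and>
      card (deficient n M (x (s + t))) \<le> (n - 1) - t * \<mu>"
proof (induction t)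
  case 0
  have "deficient n M (x s) \<subseteq> {1..n} - {m}" using m by (auto simp: deficient_def)
  then have "card (deficient n M (x s)) \<le> card ({1..n} - {m})" by (intro card_mono) auto
  also have "\<dots> = n - 1" using m(1) by simp
  finally show ?case using le m by simp
next
  case (Suc t)
  then have le_t: "\<forall>i\<in>{1..n}. x (s + t) i \<le> M" and m_t: "x (s + t) m = M"
    and card_t: "card (deficient n M (x (s + t))) \<le> (n - 1) - t * \<mu>"
    by auto
  have upd_t: "\<And>i. i \<in> {1..n} \<Longrightarrow> nn_neighbors n \<mu> (x (s + t)) i (N (s + t) i) \<and>
      x (s + Suc t) i = Max (x (s + t) ` N (s + t) i)"
    using upd[of "s + t"] by simp
  note step = max_update_step[OF le_t m(1) m_t upd_t]
  have "card (deficient n M (x (s + Suc t))) \<le>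
      card (deficient n M (x (s + t))) - min \<mu> (card (deficient n M (x (s + t))))"
    by (rule card_deficient_step[OF step(3)])
  also have "\<dots> \<le> (n - 1) - t * \<mu> - \<mu>" using card_t by linarith
  also have "\<dots> = (n - 1) - Suc t * \<mu>" by simp
  finally show ?case using step(1,2) by simp
qed

lemma ceiling_div_mult:
  assumes "\<mu> \<ge> 1"
  shows "n \<le> nat \<lceil>real n / real \<mu>\<rceil> * \<mu>"
proof -
  define T where "T = nat \<lceil>real n / real \<mu>\<rceil>"
  have "real n / real \<mu> \<le> real T" unfolding T_def by linarith
  then have "real n \<le> real T * real \<mu>" using assms by (simp add: divide_le_eq)
  then show ?thesis unfolding T_def[symmetric] by (metis of_nat_le_iff of_nat_mult)
qed

theorem theorem9:
  fixes n \<mu> k0 :: nat and x :: "nat \<Rightarrow> nat \<Rightarrow> real" and N :: "nat \<Rightarrow> nat \<Rightarrow> nat set"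
  assumes "n \<ge> 3" and "\<mu> \<ge> 1"
    and "\<And>k i. k \<ge> k0 \<Longrightarrow> i \<in> {1..n} \<Longrightarrow>
           nn_neighbors n \<mu> (x k) i (N k i) \<and> x (Suc k) i = Max (x k ` N k i)"
  shows "\<forall>i\<in>{1..n}. \<forall>j\<in>{1..n}.
           x (k0 + nat \<lceil>real n / real \<mu>\<rceil>) i = x (k0 + nat \<lceil>real n / real \<mu>\<rceil>) j"
proof -
  define M where "M = Max (x k0 ` {1..n})"
  define T where "T = nat \<lceil>real n / real \<mu>\<rceil>"
  have "M \<in> x k0 ` {1..n}" unfolding M_def using assms(1) by (intro Max_in) auto
  then obtain m where m: "m \<in> {1..n}" "x k0 m = M" by auto
  have le: "\<forall>i\<in>{1..n}. x k0 i \<le> M" unfolding M_def by simp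
  note decay = deficient_decay[where x = x and s = k0 and t = T, OF m le assms(3)]
  have "(n - 1) - T * \<mu> = 0" using ceiling_div_mult[OF assms(2), of n] by (simp add: T_def)
  then have "deficient n M (x (k0 + T)) = {}"
    using decay by (simp add: deficient_def)
  then have "\<forall>i\<in>{1..n}. x (k0 + T) i = M"
    using decay by (force simp: deficient_def)
  then show ?thesis unfolding T_def by simp
qed

end
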